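(* Let $\{\rho_n\},\{\tilde\rho_n\}\subset[-1,1]$ satisfy $\rho_n\to1$, $\tilde\rho_n\to1$ and $1-\tilde\rho_n=\Theta(1-\rho_n)$. Then for all sufficiently large $n$ there exist $\mathbf{x}_1,\mathbf{x}_2\in\mathbb{R}^n$ with $\|\mathbf{x}_1\|_2^2=nS_1$, $\|\mathbf{x}_2\|_2^2=nS_2$, $\frac{\langle\mathbf{x}_1,\mathbf{x}_2\rangle}{\|\mathbf{x}_1\|_2\|\mathbf{x}_2\|_2}=\tilde\rho_n$, such that $$\tilde T_{1,n}:=\sum_{i=1}^n\mathbb{E}\Big[\Big|\tfrac{1}{\sqrt n}\big(j_1(x_{1i},x_{2i},Y_i)-\mathbb{E}[j_1(x_{1i},x_{2i},Y_i)]\big)\Big|^3\Big]=O\Big(\frac{1-\tilde\rho_n}{\sqrt n}\Big),$$ where $Y_i=x_{1i}+x_{2i}+Z_i$ with $Z_i$ i.i.d. $\mathcal{N}(0,1)$ and $j_1$ is the information density defined with parameter $\rho=\rho_n$.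
   Context: $S_1,S_2>0$ fixed; logarithms natural. $W(y|x_1,x_2)=\frac{1}{\sqrt{2\pi}}\exp(-\frac12(y-x_1-x_2)^2)$. For a parameter $\rho\in[-1,1]$: $Q_{Y|X_2}(y|x_2):=\mathcal{N}(y;x_2(1+\rho\sqrt{S_1/S_2}),1+S_1(1-\rho^2))$ and $j_1(x_1,x_2,y):=\log\frac{W(y|x_1,x_2)}{Q_{Y|X_2}(y|x_2)}$. *)

theory Defs
  imports "HOL-Probability.Probability" "HOL-Library.Landau_Symbols"
begin

definition W :: "real \<Rightarrow> real \<Rightarrow> real \<Rightarrow> real" where
  "W y x1 x2 = normal_density (x1 + x2) 1 y"

text \<open>Q_{Y|X2}(y|x2) = N(y; x2(1+rho sqrt(S1/S2)), 1+S1(1-rho^2)); the second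
  argument of normal_density is the standard deviation.\<close>
definition QYX2 :: "real \<Rightarrow> real \<Rightarrow> real \<Rightarrow> real \<Rightarrow> real \<Rightarrow> real" where
  "QYX2 S1 S2 \<rho> y x2 =
     normal_density (x2 * (1 + \<rho> * sqrt (S1 / S2))) (sqrt (1 + S1 * (1 - \<rho>\<^sup>2))) y"

definition j1 :: "real \<Rightarrow> real \<Rightarrow> real \<Rightarrow> real \<Rightarrow> real \<Rightarrow> real \<Rightarrow> real" where
  "j1 S1 S2 \<rho> x1 x2 y = ln (W y x1 x2 / QYX2 S1 S2 \<rho> y x2)"

definition Ej1 :: "real \<Rightarrow> real \<Rightarrow> real \<Rightarrow> real \<Rightarrow> real \<Rightarrow> real" where
  "Ej1 S1 S2 \<rho> x1 x2 =
     (LINT z|lborel. std_normal_density z * j1 S1 S2 \<rho> x1 x2 (x1 + x2 + z))"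

text \<open>Vectors in R^n are represented as functions nat => real, coordinates i < n
  (0-based). tildeT_{1,n}.\<close>
definition T1 :: "real \<Rightarrow> real \<Rightarrow> real \<Rightarrow> nat \<Rightarrow> (nat \<Rightarrow> real) \<Rightarrow> (nat \<Rightarrow> real) \<Rightarrow> real" where
  "T1 S1 S2 \<rho> n x1 x2 =
     (\<Sum>i<n. LINT z|lborel. std_normal_density z *
        \<bar>(1 / sqrt (real n)) * (j1 S1 S2 \<rho> (x1 i) (x2 i) (x1 i + x2 i + z)
                                 - Ej1 S1 S2 \<rho> (x1 i) (x2 i))\<bar> ^ 3)"

definition sqnorm :: "nat \<Rightarrow> (nat \<Rightarrow> real) \<Rightarrow> real" where
  "sqnorm n x = (\<Sum>i<n. (x i)\<^sup>2)"

definition inprod :: "nat \<Rightarrow> (nat \<Rightarrow> real) \<Rightarrow> (nat \<Rightarrow> real) \<Rightarrow> real" where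
  "inprod n x y = (\<Sum>i<n. x i * y i)"

end

theory Submission
  imports Defs
begin

text \<open>For Y = x1 + x2 + Z the information density is a quadratic polynomial
  a Z^2 + b Z + c in the noise, so its centred third absolute moment is at most
  28 (|a| + |b|)^3, the constant being E[(Z^2 + 1)^3].  Here a = O(1 - \<rho>), while b is
  proportional to x1 - \<rho> sqrt (S1 / S2) x2.
  Taking x1 constant and x2 = sqrt S2 (\<rho>t + sqrt (1 - \<rho>t^2) u), with u an alternating
  vector orthogonal to the constants, of squared norm n and with entries at most sqrt 2,
  gives the prescribed correlation \<rho>t and b = O(sqrt (1 - \<rho>t)) uniformly, because
  1 - \<rho> = O(1 - \<rho>t).  Each of the n summands is then O((1 - \<rho>t)^(3/2) / n^(3/2)).\<close>

lemma has_bochner_integral_std_normal_quadratic: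
  "has_bochner_integral lborel (\<lambda>z. std_normal_density z * (A * z\<^sup>2 + B * z + C)) (A + C)"
proof -
  have m0: "has_bochner_integral lborel std_normal_density 1"
    using std_normal_moment_even[of 0] by simp
  have m1: "has_bochner_integral lborel (\<lambda>z. std_normal_density z * z) 0"
    using std_normal_moment_odd[of 0] by simp
  have m2: "has_bochner_integral lborel (\<lambda>z. std_normal_density z * z\<^sup>2) 1"
    using std_normal_moment_even[of 1] by simp
  have "has_bochner_integral lborel
      (\<lambda>z. A * (std_normal_density z * z\<^sup>2) + B * (std_normal_density z * z) + C * std_normal_density z)
      (A * 1 + B * 0 + C * 1)"
    by (intro has_bochner_integral_add has_bochner_integral_mult_right m0 m1 m2)
  then show ?thesis by (simp add: algebra_simps)
qed

lemma has_bochner_integral_std_normal_cube_quadratic: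
  "has_bochner_integral lborel (\<lambda>z. std_normal_density z * (z\<^sup>2 + 1) ^ 3) 28"
proof -
  have m0: "has_bochner_integral lborel std_normal_density 1"
    using std_normal_moment_even[of 0] by simp
  have m2: "has_bochner_integral lborel (\<lambda>z. std_normal_density z * z\<^sup>2) 1"
    using std_normal_moment_even[of 1] by simp
  have m4: "has_bochner_integral lborel (\<lambda>z. std_normal_density z * z ^ 4) 3"
    using std_normal_moment_even[of 2] by (simp add: fact_numeral)
  have m6: "has_bochner_integral lborel (\<lambda>z. std_normal_density z * z ^ 6) 15"
    using std_normal_moment_even[of 3] by (simp add: fact_numeral)
  have "has_bochner_integral lborel
      (\<lambda>z. std_normal_density z * z ^ 6 + 3 * (std_normal_density z * z ^ 4)
         + 3 * (std_normal_density z * z\<^sup>2) + std_normal_density z) (15 + 3 * 3 + 3 * 1 + 1)"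
    by (intro has_bochner_integral_add has_bochner_integral_mult_right m0 m2 m4 m6)
  moreover have "(z\<^sup>2 + 1) ^ 3 = z ^ 6 + 3 * z ^ 4 + 3 * z\<^sup>2 + 1" for z :: real
    by algebra
  ultimately show ?thesis
    by (simp add: algebra_simps)
qed

lemma abs_centered_quadratic_le:
  fixes A B z :: real
  shows "\<bar>A * (z\<^sup>2 - 1) + B * z\<bar> \<le> (\<bar>A\<bar> + \<bar>B\<bar>) * (z\<^sup>2 + 1)"
proof -
  have "\<bar>z\<^sup>2 - 1\<bar> \<le> z\<^sup>2 + 1" by (simp add: abs_le_iff)
  moreover have "\<bar>z\<bar> \<le> z\<^sup>2 + 1"
    using sum_power2_ge_zero[of "\<bar>z\<bar> - 1/2" 0] by (simp add: power2_eq_square algebra_simps)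
  ultimately have "\<bar>A\<bar> * \<bar>z\<^sup>2 - 1\<bar> + \<bar>B\<bar> * \<bar>z\<bar> \<le> \<bar>A\<bar> * (z\<^sup>2 + 1) + \<bar>B\<bar> * (z\<^sup>2 + 1)"
    by (intro add_mono mult_left_mono) auto
  moreover have "\<bar>A * (z\<^sup>2 - 1) + B * z\<bar> \<le> \<bar>A\<bar> * \<bar>z\<^sup>2 - 1\<bar> + \<bar>B\<bar> * \<bar>z\<bar>"
    by (metis abs_mult abs_triangle_ineq)
  ultimately show ?thesis by (simp add: algebra_simps)
qed

lemma std_normal_abs_cube_centered_quadratic_le:
  fixes A B :: real
  shows "(LINT z|lborel. std_normal_density z * \<bar>A * (z\<^sup>2 - 1) + B * z\<bar> ^ 3)
     \<le> 28 * (\<bar>A\<bar> + \<bar>B\<bar>) ^ 3"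
proof -
  let ?f = "\<lambda>z. std_normal_density z * \<bar>A * (z\<^sup>2 - 1) + B * z\<bar> ^ 3"
  let ?g = "\<lambda>z. (\<bar>A\<bar> + \<bar>B\<bar>) ^ 3 * (std_normal_density z * (z\<^sup>2 + 1) ^ 3)"
  have g: "has_bochner_integral lborel ?g ((\<bar>A\<bar> + \<bar>B\<bar>) ^ 3 * 28)"
    by (intro has_bochner_integral_mult_right has_bochner_integral_std_normal_cube_quadratic)
  have f_le_g: "?f z \<le> ?g z" for z
  proof -
    have "\<bar>A * (z\<^sup>2 - 1) + B * z\<bar> ^ 3 \<le> ((\<bar>A\<bar> + \<bar>B\<bar>) * (z\<^sup>2 + 1)) ^ 3"
      by (intro power_mono abs_centered_quadratic_le) simp
    then show ?thesis
      by (metis mult.left_commute mult_left_mono normal_density_nonneg power_mult_distrib)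
  qed
  have g_int: "integrable lborel ?g"
    using g by (rule integrable.intros)
  have "integrable lborel ?f"
  proof (rule Bochner_Integration.integrable_bound[OF g_int])
    show "?f \<in> borel_measurable lborel" by measurable
    show "AE z in lborel. norm (?f z) \<le> norm (?g z)"
      using f_le_g by (intro AE_I2) (simp add: abs_mult)
  qed
  then have "integral\<^sup>L lborel ?f \<le> integral\<^sup>L lborel ?g"
    using g_int f_le_g by (intro integral_mono)
  also have "\<dots> = 28 * (\<bar>A\<bar> + \<bar>B\<bar>) ^ 3"
    using has_bochner_integral_integral_eq[OF g] by simp
  finally show ?thesis .
qed

definition j1_quad_coeff :: "real \<Rightarrow> real \<Rightarrow> real" where
  "j1_quad_coeff S1 r = (1 / (1 + S1 * (1 - r\<^sup>2)) - 1) / 2"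

definition j1_lin_coeff :: "real \<Rightarrow> real \<Rightarrow> real \<Rightarrow> real \<Rightarrow> real \<Rightarrow> real" where
  "j1_lin_coeff S1 S2 r x1 x2 = (x1 - x2 * r * sqrt (S1 / S2)) / (1 + S1 * (1 - r\<^sup>2))"

lemma one_le_QYX2_variance:
  fixes S1 r :: real
  assumes "S1 \<ge> 0" and "r \<in> {-1..1}"
  shows "1 \<le> 1 + S1 * (1 - r\<^sup>2)"
proof -
  have "r\<^sup>2 \<le> 1"
    using assms(2) by (simp add: abs_square_le_1 abs_le_iff)
  then show ?thesis
    using assms(1) by simp
qed

lemma j1_quadratic_in_noise:
  fixes S1 S2 r x1 x2 :: real
  assumes "S1 \<ge> 0" and "r \<in> {-1..1}"
  obtains c where "\<And>z. j1 S1 S2 r x1 x2 (x1 + x2 + z) =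
    j1_quad_coeff S1 r * z\<^sup>2 + j1_lin_coeff S1 S2 r x1 x2 * z + c"
proof -
  define v where "v = 1 + S1 * (1 - r\<^sup>2)"
  define d where "d = x1 - x2 * r * sqrt (S1 / S2)"
  have v: "v > 0"
    using one_le_QYX2_variance[OF assms] unfolding v_def by linarith
  have "j1 S1 S2 r x1 x2 (x1 + x2 + z) =
      j1_quad_coeff S1 r * z\<^sup>2 + j1_lin_coeff S1 S2 r x1 x2 * z + (d\<^sup>2 / (2 * v) + ln (sqrt v))"
    for z
  proof -
    have shift: "x1 + x2 + z - x2 * (1 + r * sqrt (S1 / S2)) = d + z"
      unfolding d_def by (simp add: algebra_simps)
    have "W (x1 + x2 + z) x1 x2 / QYX2 S1 S2 r (x1 + x2 + z) x2
        = sqrt v * (exp (- z\<^sup>2 / 2) / exp (- (d + z)\<^sup>2 / (2 * v)))"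
      using v unfolding W_def QYX2_def normal_density_def shift v_def[symmetric]
      by (simp add: real_sqrt_mult)
    also have "\<dots> = sqrt v * exp (- z\<^sup>2 / 2 + (d + z)\<^sup>2 / (2 * v))"
      by (simp add: exp_diff[symmetric])
    finally have ratio: "W (x1 + x2 + z) x1 x2 / QYX2 S1 S2 r (x1 + x2 + z) x2
        = sqrt v * exp (- z\<^sup>2 / 2 + (d + z)\<^sup>2 / (2 * v))" .
    show ?thesis
      using v unfolding j1_def ratio j1_quad_coeff_def j1_lin_coeff_def v_def[symmetric] d_def[symmetric]
      by (simp add: ln_mult field_simps power2_eq_square)
  qed
  then show ?thesis by (rule that)
qed

lemma j1_centered:
  fixes S1 S2 r x1 x2 z :: real
  assumes "S1 \<ge> 0" and "r \<in> {-1..1}"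
  shows "j1 S1 S2 r x1 x2 (x1 + x2 + z) - Ej1 S1 S2 r x1 x2 =
    j1_quad_coeff S1 r * (z\<^sup>2 - 1) + j1_lin_coeff S1 S2 r x1 x2 * z"
proof -
  obtain c where j1_eq: "\<And>z. j1 S1 S2 r x1 x2 (x1 + x2 + z) =
      j1_quad_coeff S1 r * z\<^sup>2 + j1_lin_coeff S1 S2 r x1 x2 * z + c"
    using j1_quadratic_in_noise[OF assms] by blast
  have "Ej1 S1 S2 r x1 x2 = j1_quad_coeff S1 r + c"
    unfolding Ej1_def j1_eq
    by (rule has_bochner_integral_integral_eq[OF has_bochner_integral_std_normal_quadratic])
  then show ?thesis
    unfolding j1_eq by (simp add: algebra_simps)
qed

lemma T1_le:
  fixes S1 S2 r \<beta> :: real and x1 x2 :: "nat \<Rightarrow> real"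
  assumes "S1 \<ge> 0" and "r \<in> {-1..1}" and "n > 0"
    and coeff_le: "\<And>i. i < n \<Longrightarrow>
      \<bar>j1_quad_coeff S1 r\<bar> + \<bar>j1_lin_coeff S1 S2 r (x1 i) (x2 i)\<bar> \<le> \<beta>"
  shows "T1 S1 S2 r n x1 x2 \<le> 28 * \<beta> ^ 3 / sqrt n"
proof -
  define k where "k = 1 / sqrt n"
  have k: "k > 0"
    unfolding k_def using \<open>n > 0\<close> by simp
  have term_le: "(LINT z|lborel. std_normal_density z *
      \<bar>k * (j1 S1 S2 r (x1 i) (x2 i) (x1 i + x2 i + z) - Ej1 S1 S2 r (x1 i) (x2 i))\<bar> ^ 3)
      \<le> 28 * (k * \<beta>) ^ 3" if "i < n" for i
  proof -
    let ?a = "j1_quad_coeff S1 r" and ?b = "j1_lin_coeff S1 S2 r (x1 i) (x2 i)"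
    have "(LINT z|lborel. std_normal_density z *
        \<bar>k * (j1 S1 S2 r (x1 i) (x2 i) (x1 i + x2 i + z) - Ej1 S1 S2 r (x1 i) (x2 i))\<bar> ^ 3)
        = (LINT z|lborel. std_normal_density z * \<bar>(k * ?a) * (z\<^sup>2 - 1) + (k * ?b) * z\<bar> ^ 3)"
      unfolding j1_centered[OF assms(1,2)] by (simp add: algebra_simps)
    also have "\<dots> \<le> 28 * (\<bar>k * ?a\<bar> + \<bar>k * ?b\<bar>) ^ 3"
      by (rule std_normal_abs_cube_centered_quadratic_le)
    also have "\<dots> = 28 * (k * (\<bar>?a\<bar> + \<bar>?b\<bar>)) ^ 3"
      using k by (simp add: abs_mult algebra_simps)
    also have "\<dots> \<le> 28 * (k * \<beta>) ^ 3"
      using k coeff_le[OF that] by (intro mult_left_mono power_mono) auto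
    finally show ?thesis .
  qed
  have "T1 S1 S2 r n x1 x2 \<le> (\<Sum>i<n. 28 * (k * \<beta>) ^ 3)"
    unfolding T1_def k_def[symmetric] using term_le by (intro sum_mono) auto
  also have "\<dots> = 28 * \<beta> ^ 3 * (real n * k ^ 3)"
    by (simp add: power_mult_distrib)
  also have "real n * k ^ 3 = 1 / sqrt n"
    unfolding k_def using \<open>n > 0\<close>
    by (simp add: power3_eq_cube field_simps flip: real_sqrt_mult)
  finally show ?thesis by simp
qed

lemma abs_j1_quad_coeff_le:
  fixes S1 r :: real
  assumes "S1 \<ge> 0" and "r \<in> {-1..1}"
  shows "\<bar>j1_quad_coeff S1 r\<bar> \<le> S1 * (1 - r)"
proof -
  define v where "v = 1 + S1 * (1 - r\<^sup>2)"
  have v: "v \<ge> 1"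
    unfolding v_def using assms by (rule one_le_QYX2_variance)
  have "\<bar>j1_quad_coeff S1 r\<bar> = (v - 1) / (2 * v)"
    using v unfolding j1_quad_coeff_def v_def[symmetric] by (simp add: field_simps)
  also have "\<dots> \<le> (v - 1) / 2"
    using v by (intro divide_left_mono) auto
  also have "v - 1 = S1 * ((1 - r) * (1 + r))"
    unfolding v_def by (simp add: power2_eq_square algebra_simps)
  also have "\<dots> \<le> S1 * ((1 - r) * 2)"
    using assms by (intro mult_left_mono) auto
  finally show ?thesis by linarith
qed

lemma sqrt_one_minus_square_le:
  fixes t :: real
  assumes "t \<in> {-1..1}"
  shows "sqrt 2 * sqrt (1 - t\<^sup>2) \<le> 2 * sqrt (1 - t)"
proof -
  have "(1 - t) * (1 + t) \<le> (1 - t) * 2"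
    using assms by (intro mult_left_mono) auto
  then have "2 * (1 - t\<^sup>2) \<le> 4 * (1 - t)"
    by (simp add: power2_eq_square algebra_simps)
  then have "sqrt (2 * (1 - t\<^sup>2)) \<le> sqrt (4 * (1 - t))"
    by (rule real_sqrt_le_mono)
  also have "sqrt (4 * (1 - t)) = 2 * sqrt (1 - t)"
    unfolding real_sqrt_mult by simp
  finally show ?thesis
    by (simp only: real_sqrt_mult)
qed

lemma abs_one_minus_partner_le:
  fixes r t u :: real
  assumes "r \<in> {-1..1}" and "t \<in> {-1..1}" and "\<bar>u\<bar> \<le> sqrt 2"
  shows "\<bar>1 - r * (t + sqrt (1 - t\<^sup>2) * u)\<bar> \<le> (1 - r) + (1 - t) + 2 * sqrt (1 - t)"
proof -
  have "\<bar>r * (1 - t)\<bar> \<le> 1 - t"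
    using assms(1,2) by (auto simp: abs_mult intro!: mult_left_le_one_le)
  moreover have "\<bar>r * sqrt (1 - t\<^sup>2) * u\<bar> \<le> 2 * sqrt (1 - t)"
  proof -
    have "t\<^sup>2 \<le> 1"
      using assms(2) by (simp add: abs_square_le_1 abs_le_iff)
    then have "\<bar>r * sqrt (1 - t\<^sup>2) * u\<bar> \<le> 1 * sqrt (1 - t\<^sup>2) * sqrt 2"
      unfolding abs_mult using assms(1,3) by (intro mult_mono) auto
    then show ?thesis
      using sqrt_one_minus_square_le[OF assms(2)] by (simp add: mult.commute)
  qed
  moreover have "1 - r * (t + sqrt (1 - t\<^sup>2) * u) = (1 - r) + r * (1 - t) - r * sqrt (1 - t\<^sup>2) * u"
    by (simp add: algebra_simps)
  ultimately show ?thesis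
    using assms(1) by auto
qed

lemma j1_lin_coeff_scaled:
  fixes S1 S2 r x :: real
  assumes "S1 \<ge> 0" and "S2 > 0"
  shows "j1_lin_coeff S1 S2 r (sqrt S1) (sqrt S2 * x) = sqrt S1 * (1 - r * x) / (1 + S1 * (1 - r\<^sup>2))"
proof -
  have "sqrt S2 * sqrt (S1 / S2) = sqrt S1"
    using assms by (simp flip: real_sqrt_mult)
  then show ?thesis
    unfolding j1_lin_coeff_def by (simp add: algebra_simps)
qed

lemma abs_j1_lin_coeff_partner_le:
  fixes S1 S2 r t u :: real
  assumes "S1 \<ge> 0" and "S2 > 0" and "r \<in> {-1..1}" and "t \<in> {-1..1}" and "\<bar>u\<bar> \<le> sqrt 2"
  shows "\<bar>j1_lin_coeff S1 S2 r (sqrt S1) (sqrt S2 * (t + sqrt (1 - t\<^sup>2) * u))\<bar>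
    \<le> sqrt S1 * ((1 - r) + (1 - t) + 2 * sqrt (1 - t))"
proof -
  let ?m = "\<bar>1 - r * (t + sqrt (1 - t\<^sup>2) * u)\<bar>"
  have "\<bar>j1_lin_coeff S1 S2 r (sqrt S1) (sqrt S2 * (t + sqrt (1 - t\<^sup>2) * u))\<bar>
      = sqrt S1 * ?m / (1 + S1 * (1 - r\<^sup>2))"
    using assms(1,2) one_le_QYX2_variance[OF assms(1,3)] by (simp add: j1_lin_coeff_scaled abs_mult)
  also have "\<dots> \<le> sqrt S1 * ?m"
    using assms(1) one_le_QYX2_variance[OF assms(1,3)]
      divide_left_mono[of 1 "1 + S1 * (1 - r\<^sup>2)" "sqrt S1 * ?m"]
    by simp
  also have "\<dots> \<le> sqrt S1 * ((1 - r) + (1 - t) + 2 * sqrt (1 - t))"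
    using assms by (intro mult_left_mono abs_one_minus_partner_le) auto
  finally show ?thesis .
qed

definition partner_coeff_const :: "real \<Rightarrow> real \<Rightarrow> real" where
  "partner_coeff_const S1 K = (S1 + sqrt S1) * K * sqrt 2 + sqrt S1 * (sqrt 2 + 2)"

lemma j1_coeffs_partner_le:
  fixes S1 S2 r t u K :: real
  assumes "S1 \<ge> 0" and "S2 > 0" and "r \<in> {-1..1}" and "t \<in> {-1..1}" and "\<bar>u\<bar> \<le> sqrt 2"
    and "K \<ge> 0" and r_close: "1 - r \<le> K * (1 - t)"
  shows "\<bar>j1_quad_coeff S1 r\<bar> + \<bar>j1_lin_coeff S1 S2 r (sqrt S1) (sqrt S2 * (t + sqrt (1 - t\<^sup>2) * u))\<bar>
    \<le> partner_coeff_const S1 K * sqrt (1 - t)"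
proof -
  define e where "e = 1 - t"
  have "e \<ge> 0" and "e \<le> 2"
    unfolding e_def using assms(4) by auto
  then have e_le: "e \<le> sqrt 2 * sqrt e"
    using mult_right_mono[of "sqrt e" "sqrt 2" "sqrt e"] by simp
  have r_le: "1 - r \<le> K * sqrt 2 * sqrt e"
    using r_close mult_left_mono[OF e_le \<open>K \<ge> 0\<close>] unfolding e_def by (simp add: mult.assoc)
  have "\<bar>j1_quad_coeff S1 r\<bar> \<le> S1 * (1 - r)"
    using assms(1,3) by (rule abs_j1_quad_coeff_le)
  also have "\<dots> \<le> S1 * (K * sqrt 2 * sqrt e)"
    using r_le assms(1) by (intro mult_left_mono) auto
  finally have quad_le: "\<bar>j1_quad_coeff S1 r\<bar> \<le> S1 * (K * sqrt 2 * sqrt e)" .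
  have "\<bar>j1_lin_coeff S1 S2 r (sqrt S1) (sqrt S2 * (t + sqrt (1 - t\<^sup>2) * u))\<bar>
      \<le> sqrt S1 * ((1 - r) + e + 2 * sqrt e)"
    unfolding e_def using assms(1-5) by (intro abs_j1_lin_coeff_partner_le) auto
  also have "\<dots> \<le> sqrt S1 * (K * sqrt 2 * sqrt e + sqrt 2 * sqrt e + 2 * sqrt e)"
    using r_le e_le assms(1) by (intro mult_left_mono add_mono) auto
  finally show ?thesis
    using quad_le unfolding partner_coeff_const_def e_def by (simp add: algebra_simps)
qed

definition alt_vec :: "nat \<Rightarrow> nat \<Rightarrow> real" where
  "alt_vec n i = (if i < 2 * (n div 2) then (-1) ^ i * sqrt (real n / real (2 * (n div 2))) else 0)"

lemma sum_lessThan_if_less: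
  fixes g :: "nat \<Rightarrow> real"
  assumes "m \<le> n"
  shows "(\<Sum>i<n. if i < m then g i else 0) = (\<Sum>i<m. g i)"
proof -
  have "{i \<in> {..<n}. i < m} = {..<m}"
    using assms by auto
  then show ?thesis
    by (metis finite_lessThan sum.inter_filter)
qed

lemma sum_alt_vec: "(\<Sum>i<n. alt_vec n i) = 0"
proof -
  have "(\<Sum>i<2 * (n div 2). (-1::real) ^ i) = 0"
    by (simp add: sum_gp_strict)
  then show ?thesis
    unfolding alt_vec_def by (simp add: sum_lessThan_if_less flip: sum_distrib_right)
qed

lemma sum_alt_vec_squares:
  assumes "n \<ge> 2"
  shows "(\<Sum>i<n. (alt_vec n i)\<^sup>2) = n"
proof -
  define m where "m = 2 * (n div 2)"
  have "m > 0" and "m \<le> n"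
    unfolding m_def using assms by auto
  have "(\<Sum>i<n. (alt_vec n i)\<^sup>2) = (\<Sum>i<n. if i < m then n / m else 0)"
    unfolding alt_vec_def m_def[symmetric]
    by (intro sum.cong) (auto simp: power_mult_distrib simp flip: power_even_eq)
  also have "\<dots> = n"
    using \<open>m > 0\<close> \<open>m \<le> n\<close> by (simp add: sum_lessThan_if_less)
  finally show ?thesis .
qed

lemma abs_alt_vec_le:
  assumes "n \<ge> 2"
  shows "\<bar>alt_vec n i\<bar> \<le> sqrt 2"
proof -
  define m where "m = 2 * (n div 2)"
  have "m > 0" and "n \<le> 2 * m"
    unfolding m_def using assms by auto
  then have "sqrt (n / m) \<le> sqrt 2"
    by (simp add: divide_le_eq)
  then show ?thesis
    unfolding alt_vec_def m_def[symmetric] by (simp add: abs_mult)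
qed

definition correlated_partner :: "real \<Rightarrow> real \<Rightarrow> nat \<Rightarrow> nat \<Rightarrow> real" where
  "correlated_partner S2 t n i = sqrt S2 * (t + sqrt (1 - t\<^sup>2) * alt_vec n i)"

lemma sqnorm_const: "sqnorm n (\<lambda>_. sqrt S) = n * S" if "S \<ge> 0"
  using that unfolding sqnorm_def by simp

lemma sqnorm_correlated_partner:
  assumes "n \<ge> 2" and "S2 \<ge> 0" and "t \<in> {-1..1}"
  shows "sqnorm n (correlated_partner S2 t n) = n * S2"
proof -
  define s where "s = sqrt (1 - t\<^sup>2)"
  have "t\<^sup>2 \<le> 1"
    using assms(3) by (simp add: abs_square_le_1 abs_le_iff)
  then have s2: "s\<^sup>2 = 1 - t\<^sup>2"
    unfolding s_def by simp
  have "sqnorm n (correlated_partner S2 t n) =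
      (\<Sum>i<n. S2 * t\<^sup>2 + (2 * S2 * t * s) * alt_vec n i + (S2 * s\<^sup>2) * (alt_vec n i)\<^sup>2)"
    unfolding sqnorm_def correlated_partner_def s_def[symmetric] using assms(2)
    by (intro sum.cong) (simp_all add: power_mult_distrib power2_sum algebra_simps)
  also have "\<dots> = n * S2 * t\<^sup>2 + (2 * S2 * t * s) * (\<Sum>i<n. alt_vec n i)
      + (S2 * s\<^sup>2) * (\<Sum>i<n. (alt_vec n i)\<^sup>2)"
    by (simp add: sum.distrib sum_distrib_left)
  also have "\<dots> = n * S2"
    using assms(1) by (simp add: sum_alt_vec sum_alt_vec_squares s2 algebra_simps)
  finally show ?thesis .
qed

lemma inprod_const_correlated_partner:
  "inprod n (\<lambda>_. sqrt S1) (correlated_partner S2 t n) = n * sqrt S1 * sqrt S2 * t"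
proof -
  have "inprod n (\<lambda>_. sqrt S1) (correlated_partner S2 t n) =
      (\<Sum>i<n. sqrt S1 * sqrt S2 * t + (sqrt S1 * sqrt S2 * sqrt (1 - t\<^sup>2)) * alt_vec n i)"
    unfolding inprod_def correlated_partner_def by (simp add: algebra_simps)
  also have "\<dots> = n * sqrt S1 * sqrt S2 * t"
    by (simp add: sum.distrib sum_alt_vec flip: sum_distrib_left)
  finally show ?thesis .
qed

lemma const_correlated_partner_geometry:
  assumes "n \<ge> 2" and "S1 > 0" and "S2 > 0" and "t \<in> {-1..1}"
  shows "sqnorm n (\<lambda>_. sqrt S1) = n * S1 \<and> sqnorm n (correlated_partner S2 t n) = n * S2 \<and>
    inprod n (\<lambda>_. sqrt S1) (correlated_partner S2 t n) /
      (sqrt (sqnorm n (\<lambda>_. sqrt S1)) * sqrt (sqnorm n (correlated_partner S2 t n))) = t"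
proof -
  have "sqrt (n * S1) * sqrt (n * S2) = n * sqrt S1 * sqrt S2"
    by (simp add: real_sqrt_mult)
  moreover have "n * sqrt S1 * sqrt S2 > 0"
    using assms by simp
  ultimately show ?thesis
    using assms by (simp add: sqnorm_const sqnorm_correlated_partner inprod_const_correlated_partner)
qed

lemma T1_nonneg: "T1 S1 S2 r n x1 x2 \<ge> 0"
  unfolding T1_def by (intro sum_nonneg integral_nonneg) simp

lemma T1_const_correlated_partner_le:
  fixes S1 S2 r t K :: real
  assumes "n \<ge> 2" and "S1 \<ge> 0" and "S2 > 0" and "r \<in> {-1..1}" and "t \<in> {-1..1}"
    and "K \<ge> 0" and "1 - r \<le> K * (1 - t)"
  shows "T1 S1 S2 r n (\<lambda>_. sqrt S1) (correlated_partner S2 t n)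
    \<le> 28 * sqrt 2 * partner_coeff_const S1 K ^ 3 * ((1 - t) / sqrt n)"
proof -
  define M where "M = partner_coeff_const S1 K"
  define e where "e = 1 - t"
  have "e \<ge> 0" and "e \<le> 2"
    unfolding e_def using assms(5) by auto
  have "M \<ge> 0"
    unfolding M_def partner_coeff_const_def using assms(2,6) by simp
  have "T1 S1 S2 r n (\<lambda>_. sqrt S1) (correlated_partner S2 t n) \<le> 28 * (M * sqrt e) ^ 3 / sqrt n"
    unfolding correlated_partner_def M_def e_def using assms
    by (intro T1_le j1_coeffs_partner_le abs_alt_vec_le) auto
  also have "(M * sqrt e) ^ 3 = M ^ 3 * (sqrt e * e)"
    using \<open>e \<ge> 0\<close> by (simp add: power_mult_distrib power3_eq_cube)
  also have "\<dots> \<le> M ^ 3 * (sqrt 2 * e)"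
    using \<open>e \<ge> 0\<close> \<open>e \<le> 2\<close> \<open>M \<ge> 0\<close> by (intro mult_left_mono mult_right_mono) auto
  finally show ?thesis
    unfolding M_def e_def by (simp add: divide_right_mono mult.assoc mult.left_commute)
qed

theorem lemma5:
  fixes S1 S2 :: real and \<rho> \<rho>t :: "nat \<Rightarrow> real"
  assumes "S1 > 0" and "S2 > 0"
    and "\<And>n. \<rho> n \<in> {-1..1}" and "\<And>n. \<rho>t n \<in> {-1..1}"
    and "\<rho> \<longlonglongrightarrow> 1" and "\<rho>t \<longlonglongrightarrow> 1"
    and "(\<lambda>n. 1 - \<rho>t n) \<in> \<Theta>(\<lambda>n. 1 - \<rho> n)"
  shows "\<exists>X1 X2 :: nat \<Rightarrow> nat \<Rightarrow> real.
           (\<forall>\<^sub>F n in sequentially.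
              sqnorm n (X1 n) = real n * S1 \<and> sqnorm n (X2 n) = real n * S2 \<and>
              inprod n (X1 n) (X2 n) / (sqrt (sqnorm n (X1 n)) * sqrt (sqnorm n (X2 n))) = \<rho>t n) \<and>
           (\<lambda>n. T1 S1 S2 (\<rho> n) n (X1 n) (X2 n)) \<in> O(\<lambda>n. (1 - \<rho>t n) / sqrt (real n))"
proof -
  define X1 where "X1 = (\<lambda>(n::nat) (i::nat). sqrt S1)"
  define X2 where "X2 = (\<lambda>n. correlated_partner S2 (\<rho>t n) n)"
  have "(\<lambda>n. 1 - \<rho> n) \<in> O(\<lambda>n. 1 - \<rho>t n)"
    using assms(7) by (simp add: bigtheta_sym bigthetaD1)
  then obtain K where "K > 0" and
    close: "\<forall>\<^sub>F n in sequentially. norm (1 - \<rho> n) \<le> K * norm (1 - \<rho>t n)"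
    by (rule landau_o.bigE)
  have "\<forall>\<^sub>F n in sequentially. norm (T1 S1 S2 (\<rho> n) n (X1 n) (X2 n))
      \<le> 28 * sqrt 2 * partner_coeff_const S1 K ^ 3 * norm ((1 - \<rho>t n) / sqrt n)"
    using close eventually_ge_at_top[of "2::nat"]
  proof eventually_elim
    case (elim n)
    then have "1 - \<rho> n \<le> K * (1 - \<rho>t n)"
      using assms(3,4)[of n] by simp
    then have "T1 S1 S2 (\<rho> n) n (X1 n) (X2 n)
        \<le> 28 * sqrt 2 * partner_coeff_const S1 K ^ 3 * ((1 - \<rho>t n) / sqrt n)"
      unfolding X1_def X2_def using elim(2) assms(1-4) \<open>K > 0\<close>
      by (intro T1_const_correlated_partner_le) auto
    then show ?case
      using T1_nonneg assms(4)[of n] by simp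
  qed
  then have "(\<lambda>n. T1 S1 S2 (\<rho> n) n (X1 n) (X2 n)) \<in> O(\<lambda>n. (1 - \<rho>t n) / sqrt n)"
    by (rule bigoI)
  moreover have "\<forall>\<^sub>F n in sequentially.
      sqnorm n (X1 n) = n * S1 \<and> sqnorm n (X2 n) = n * S2 \<and>
      inprod n (X1 n) (X2 n) / (sqrt (sqnorm n (X1 n)) * sqrt (sqnorm n (X2 n))) = \<rho>t n"
    unfolding X1_def X2_def using eventually_ge_at_top[of "2::nat"]
    by eventually_elim (intro const_correlated_partner_geometry assms)
  ultimately show ?thesis
    by blast
qed

end
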